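(* Let $G$ be a graph with vertex set $A \cup B$, where $A$ and $B$ are disjoint. In each of the following cases there is a fractional triangle packing $\omega$ in $G$ which assigns positive weight only to cross triangles (triangles with at least one vertex in $A$ and at least one in $B$), such that $\omega(e) = 1/2$ for every edge $e$ of $G$ with both ends in $A$ or both ends in $B$: (a) $2 \le |A| \le |B| \le |A| + 2$, and the bipartite graph $G[A,B]$ of edges of $G$ between $A$ and $B$ is complete bipartite; (b) $3 \le |A| \le |B| \le |A| + 1$, and $G[A,B]$ is a complete bipartite graph minus a matching; (c) $3 \le |A| \le |B| \le |A| + 1$, and $G[A,B]$ is a complete bipartite graph minus two edges that share a common vertex in $A$; (d) $|A| = 3$, $|B| = 5$, and $G[A,B]$ is a complete bipartite graph minus a matching of size $2$.
   Context: A fractional triangle packing in a graph $G$ is a function $\omega$ from the set of triangles of $G$ to $[0,1]$ such that $\omega(e) := \sum_{T \ni e}\omega(T) \le 1$ for every edge $e$ of $G$, where the sum is over triangles $T$ of $G$ containing $e$. *)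

theory Defs
  imports Complex_Main
begin

definition simple_graph :: "'a set \<Rightarrow> 'a set set \<Rightarrow> bool" where
  "simple_graph V E \<longleftrightarrow> finite V \<and> (\<forall>e\<in>E. e \<subseteq> V \<and> card e = 2)"

definition triangles :: "'a set \<Rightarrow> 'a set set \<Rightarrow> 'a set set" where
  "triangles V E = {T. T \<subseteq> V \<and> card T = 3 \<and> (\<forall>x\<in>T. \<forall>y\<in>T. x \<noteq> y \<longrightarrow> {x, y} \<in> E)}"

definition edge_weight :: "'a set \<Rightarrow> 'a set set \<Rightarrow> ('a set \<Rightarrow> real) \<Rightarrow> 'a set \<Rightarrow> real" where
  "edge_weight V E \<omega> e = (\<Sum>T\<in>{T\<in>triangles V E. e \<subseteq> T}. \<omega> T)"

definition frac_triangle_packing :: "'a set \<Rightarrow> 'a set set \<Rightarrow> ('a set \<Rightarrow> real) \<Rightarrow> bool" where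
  "frac_triangle_packing V E \<omega> \<longleftrightarrow>
     (\<forall>T\<in>triangles V E. 0 \<le> \<omega> T \<and> \<omega> T \<le> 1) \<and>
     (\<forall>e\<in>E. edge_weight V E \<omega> e \<le> 1)"

definition cross :: "'a set \<Rightarrow> 'a set \<Rightarrow> 'a set \<Rightarrow> bool" where
  "cross A B T \<longleftrightarrow> T \<inter> A \<noteq> {} \<and> T \<inter> B \<noteq> {}"

definition bip_edges :: "'a set set \<Rightarrow> 'a set \<Rightarrow> 'a set \<Rightarrow> 'a set set" where
  "bip_edges E A B = {e\<in>E. e \<inter> A \<noteq> {} \<and> e \<inter> B \<noteq> {}}"

definition complete_bip :: "'a set \<Rightarrow> 'a set \<Rightarrow> 'a set set" where
  "complete_bip A B = {{a, b} | a b. a \<in> A \<and> b \<in> B}"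

definition is_matching :: "'a set set \<Rightarrow> bool" where
  "is_matching M \<longleftrightarrow> (\<forall>e\<in>M. \<forall>f\<in>M. e \<noteq> f \<longrightarrow> e \<inter> f = {})"

end

theory Submission
  imports Defs
begin

(* All weightings used here live on triangles with two vertices on one side and the third
   vertex, the apex, on the other.  Fix a relation r of usable cross edges and weights wA P c
   for pairs P in A with apex c in B, and wB Q x for pairs Q in B with apex x in A.  An edge
   inside A then carries the total weight of its common r-neighbours, and a cross edge xc lies
   only in triangles {x, y, c} and {x, c, d}, so it carries at most its load, the sum of the
   wA {x, y} c and the wB {c, d} x.  It therefore suffices to find weights that sum to 1/2 over
   the apexes of every pair and give every load at most 1.  In case (a), in case (b) after
   extending the matching to an injection of A into B, and in case (c) with |A| >= 4, the
   uniform weights 1/(2 |N(P)|), N(P) the common neighbourhood of P, work; their loads are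
   computed from the codegrees.  The two remaining configurations, (c) with |A| = 3 and (d),
   are settled by explicit weights. *)

section \<open>Weightings supported on cross triangles\<close>

definition half_cross_packing :: "'a set \<Rightarrow> 'a set \<Rightarrow> 'a set set \<Rightarrow> ('a set \<Rightarrow> real) \<Rightarrow> bool" where
  "half_cross_packing A B E \<omega> \<longleftrightarrow>
     frac_triangle_packing (A \<union> B) E \<omega> \<and>
     (\<forall>T\<in>triangles (A \<union> B) E. 0 < \<omega> T \<longrightarrow> cross A B T) \<and>
     (\<forall>e\<in>E. (e \<subseteq> A \<or> e \<subseteq> B) \<longrightarrow> edge_weight (A \<union> B) E \<omega> e = 1 / 2)"

definition common_nbrs :: "('a \<Rightarrow> 'b \<Rightarrow> bool) \<Rightarrow> 'b set \<Rightarrow> 'a set \<Rightarrow> 'b set" where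
  "common_nbrs r B P = {c\<in>B. \<forall>x\<in>P. r x c}"

definition apex_weighting ::
    "'a set \<Rightarrow> 'a set \<Rightarrow> ('a \<Rightarrow> 'a \<Rightarrow> bool) \<Rightarrow> ('a set \<Rightarrow> 'a \<Rightarrow> real) \<Rightarrow> 'a set \<Rightarrow> real" where
  "apex_weighting A B r w T =
     (if card (T \<inter> A) = 2 \<and> card (T \<inter> B) = 1 \<and> (\<forall>x\<in>T \<inter> A. r x (the_elem (T \<inter> B)))
      then w (T \<inter> A) (the_elem (T \<inter> B)) else 0)"

lemma apex_weighting_nonneg: "(\<And>P c. 0 \<le> w P c) \<Longrightarrow> 0 \<le> apex_weighting A B r w T"
  by (simp add: apex_weighting_def)

lemma apex_weighting_pos_imp_cross: "0 < apex_weighting A B r w T \<Longrightarrow> cross A B T"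
  by (auto simp: apex_weighting_def cross_def split: if_splits)

lemma apex_weighting_eq_0_if_two_in_B:
  assumes "finite T" "{u, v} \<subseteq> T \<inter> B" "u \<noteq> v"
  shows "apex_weighting A B r w T = 0"
proof -
  have "card (T \<inter> B) \<ge> 2" using card_mono[of "T \<inter> B" "{u, v}"] assms by auto
  then show ?thesis by (simp add: apex_weighting_def)
qed

lemma apex_weighting_apex:
  assumes "u \<in> A" "v \<in> A" "u \<noteq> v" "c \<in> B" "A \<inter> B = {}"
  shows "apex_weighting A B r w {u, v, c} = (if r u c \<and> r v c then w {u, v} c else 0)"
proof -
  have "{u, v, c} \<inter> A = {u, v}" "{u, v, c} \<inter> B = {c}" using assms by auto
  then show ?thesis using assms by (simp add: apex_weighting_def)
qed

lemma apex_weighting_le_half: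
  assumes "finite B" and nonneg: "\<And>P c. 0 \<le> w P c"
    and half: "\<And>x y. x \<in> A \<Longrightarrow> y \<in> A \<Longrightarrow> x \<noteq> y \<Longrightarrow> (\<Sum>c\<in>common_nbrs r B {x, y}. w {x, y} c) = 1/2"
  shows "apex_weighting A B r w T \<le> 1/2"
proof (cases "card (T \<inter> A) = 2 \<and> card (T \<inter> B) = 1 \<and> (\<forall>x\<in>T \<inter> A. r x (the_elem (T \<inter> B)))")
  case True
  then obtain x y c where xy: "T \<inter> A = {x, y}" "x \<noteq> y" and c: "T \<inter> B = {c}"
    by (meson card_1_singletonE card_2_iff)
  have "c \<in> common_nbrs r B {x, y}" using True xy c by (auto simp: common_nbrs_def)
  then have "w {x, y} c \<le> (\<Sum>c\<in>common_nbrs r B {x, y}. w {x, y} c)"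
    using \<open>finite B\<close> nonneg by (intro member_le_sum) (auto simp: common_nbrs_def)
  also have "\<dots> = 1/2" using half xy by blast
  finally show ?thesis using True xy c by (simp add: apex_weighting_def)
qed (auto simp: apex_weighting_def)

lemma finite_triangle: "T \<in> triangles V E \<Longrightarrow> finite T"
  by (simp add: triangles_def card_ge_0_finite)

lemma edge_weight_eq_sum_apexes:
  assumes G: "simple_graph V E" and e: "{u, v} \<in> E" and "u \<noteq> v"
  shows "edge_weight V E \<omega> {u, v} = (\<Sum>z\<in>{z\<in>V - {u, v}. {u, z} \<in> E \<and> {v, z} \<in> E}. \<omega> {u, v, z})"
proof -
  let ?N = "{z\<in>V - {u, v}. {u, z} \<in> E \<and> {v, z} \<in> E}"
  have "{T\<in>triangles V E. {u, v} \<subseteq> T} = (\<lambda>z. {u, v, z}) ` ?N"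
  proof (intro equalityI subsetI)
    fix T assume "T \<in> {T\<in>triangles V E. {u, v} \<subseteq> T}"
    then have T: "T \<subseteq> V" "card T = 3" "\<forall>x\<in>T. \<forall>y\<in>T. x \<noteq> y \<longrightarrow> {x, y} \<in> E" "{u, v} \<subseteq> T"
      by (auto simp: triangles_def)
    have "finite T" using T(2) by (simp add: card_ge_0_finite)
    then have "card (T - {u, v}) = 1"
      using T(2,4) \<open>u \<noteq> v\<close> by (simp add: card_Diff_subset)
    then obtain z where z: "T - {u, v} = {z}" by (meson card_1_singletonE)
    then have "z \<in> T" "z \<noteq> u" "z \<noteq> v" "T = {u, v, z}" using T(4) by auto
    then have "z \<in> ?N" "T = {u, v, z}" using T(1,3,4) by auto
    then show "T \<in> (\<lambda>z. {u, v, z}) ` ?N" by blast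
  next
    fix T assume "T \<in> (\<lambda>z. {u, v, z}) ` ?N"
    then obtain z where z: "z \<in> ?N" "T = {u, v, z}" by blast
    have "{u, v} \<subseteq> V" using G e by (auto simp: simple_graph_def)
    moreover have "{v, u} \<in> E" "{z, u} \<in> E" "{z, v} \<in> E" using e z by (auto simp: insert_commute)
    ultimately show "T \<in> {T\<in>triangles V E. {u, v} \<subseteq> T}"
      using z e \<open>u \<noteq> v\<close> by (auto simp: triangles_def)
  qed
  moreover have "inj_on (\<lambda>z. {u, v, z}) ?N" by (rule inj_onI) auto
  ultimately show ?thesis by (simp add: edge_weight_def sum.reindex)
qed

lemma edge_weight_apex_weighting_inside:
  assumes G: "simple_graph (A \<union> B) E" and disj: "A \<inter> B = {}"
    and r: "\<And>x c. r x c \<Longrightarrow> {x, c} \<in> E"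
    and uv: "u \<in> A" "v \<in> A" "u \<noteq> v" "{u, v} \<in> E"
  shows "edge_weight (A \<union> B) E (apex_weighting A B r w) {u, v} =
    (\<Sum>c\<in>common_nbrs r B {u, v}. w {u, v} c)"
proof -
  let ?N = "{z\<in>A \<union> B - {u, v}. {u, z} \<in> E \<and> {v, z} \<in> E}"
  have fin: "finite ?N" using G by (auto simp: simple_graph_def)
  have "apex_weighting A B r w {u, v, z} = (if z \<in> common_nbrs r B {u, v} then w {u, v} z else 0)"
    if "z \<in> ?N" for z
  proof (cases "z \<in> A")
    case True
    then have "card ({u, v, z} \<inter> B) = 0" using disj uv by auto
    then show ?thesis using True disj by (auto simp: apex_weighting_def common_nbrs_def)
  qed (use that uv disj in \<open>auto simp: apex_weighting_apex common_nbrs_def\<close>)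
  then have "(\<Sum>z\<in>?N. apex_weighting A B r w {u, v, z}) =
      (\<Sum>z\<in>?N \<inter> common_nbrs r B {u, v}. w {u, v} z)"
    using fin by (simp add: sum.inter_restrict)
  also have "?N \<inter> common_nbrs r B {u, v} = common_nbrs r B {u, v}"
  proof -
    have "{u, z} \<in> E" "{v, z} \<in> E" if "z \<in> common_nbrs r B {u, v}" for z
      using that r by (auto simp: common_nbrs_def)
    then show ?thesis using uv(1,2) disj by (auto simp: common_nbrs_def)
  qed
  finally show ?thesis using edge_weight_eq_sum_apexes[OF G uv(4,3)] by simp
qed

lemma edge_weight_apex_weighting_opposite:
  assumes "u \<in> B" "v \<in> B" "u \<noteq> v"
  shows "edge_weight V E (apex_weighting A B r w) {u, v} = 0"
  unfolding edge_weight_def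
proof (rule sum.neutral, intro ballI)
  fix T assume "T \<in> {T\<in>triangles V E. {u, v} \<subseteq> T}"
  then have "finite T" "{u, v} \<subseteq> T \<inter> B" using assms finite_triangle by auto
  then show "apex_weighting A B r w T = 0" using \<open>u \<noteq> v\<close> by (rule apex_weighting_eq_0_if_two_in_B)
qed

lemma edge_weight_apex_weighting_cross_le:
  assumes G: "simple_graph (A \<union> B) E" and disj: "A \<inter> B = {}"
    and nonneg: "\<And>P c. 0 \<le> w P c"
    and xc: "x \<in> A" "c \<in> B" "{x, c} \<in> E"
  shows "edge_weight (A \<union> B) E (apex_weighting A B r w) {x, c} \<le>
           (\<Sum>y\<in>{y\<in>A - {x}. r x c \<and> r y c}. w {x, y} c)"
proof -
  let ?N = "{z\<in>A \<union> B - {x, c}. {x, z} \<in> E \<and> {c, z} \<in> E}"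
  let ?S = "{y\<in>A - {x}. r x c \<and> r y c}"
  have fin: "finite ?N" "finite ?S" using G by (auto simp: simple_graph_def)
  have "x \<noteq> c" using xc disj by auto
  have "apex_weighting A B r w {x, c, z} = (if z \<in> ?S then w {x, z} c else 0)" if "z \<in> ?N" for z
  proof (cases "z \<in> A")
    case True
    then show ?thesis
      using that xc disj apex_weighting_apex[of x A z c B r w] by (auto simp: insert_commute)
  next
    case False
    then have "{c, z} \<subseteq> {x, c, z} \<inter> B" "c \<noteq> z" using that xc by auto
    then have "apex_weighting A B r w {x, c, z} = 0" by (intro apex_weighting_eq_0_if_two_in_B) auto
    then show ?thesis using False by simp
  qed
  then have "edge_weight (A \<union> B) E (apex_weighting A B r w) {x, c} = (\<Sum>z\<in>?N \<inter> ?S. w {x, z} c)"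
    using edge_weight_eq_sum_apexes[OF G xc(3) \<open>x \<noteq> c\<close>] fin by (simp add: sum.inter_restrict)
  also have "\<dots> \<le> (\<Sum>y\<in>?S. w {x, y} c)"
    using fin nonneg by (intro sum_mono2) auto
  finally show ?thesis .
qed

definition cross_weighting ::
    "'a set \<Rightarrow> 'a set \<Rightarrow> ('a \<Rightarrow> 'a \<Rightarrow> bool) \<Rightarrow> ('a set \<Rightarrow> 'a \<Rightarrow> real) \<Rightarrow> ('a set \<Rightarrow> 'a \<Rightarrow> real) \<Rightarrow>
      'a set \<Rightarrow> real" where
  "cross_weighting A B r wA wB T = apex_weighting A B r wA T + apex_weighting B A r\<inverse>\<inverse> wB T"

lemma cross_weighting_swap: "cross_weighting B A r\<inverse>\<inverse> wB wA = cross_weighting A B r wA wB"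
  by (simp add: fun_eq_iff cross_weighting_def)

lemma edge_weight_cross_weighting:
  "edge_weight V E (cross_weighting A B r wA wB) e =
     edge_weight V E (apex_weighting A B r wA) e + edge_weight V E (apex_weighting B A r\<inverse>\<inverse> wB) e"
  by (simp add: edge_weight_def cross_weighting_def sum.distrib)

lemma edge_weight_cross_weighting_inside:
  assumes G: "simple_graph (A \<union> B) E" and disj: "A \<inter> B = {}"
    and r: "\<And>x c. r x c \<Longrightarrow> {x, c} \<in> E"
    and uv: "u \<in> A" "v \<in> A" "u \<noteq> v" "{u, v} \<in> E"
  shows "edge_weight (A \<union> B) E (cross_weighting A B r wA wB) {u, v} =
    (\<Sum>c\<in>common_nbrs r B {u, v}. wA {u, v} c)"
  using edge_weight_apex_weighting_inside[OF G disj r uv]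
    edge_weight_apex_weighting_opposite[of u A v "A \<union> B" E B "r\<inverse>\<inverse>" wB] uv
  by (simp add: edge_weight_cross_weighting)

lemma edge_weight_cross_weighting_cross_le:
  assumes G: "simple_graph (A \<union> B) E" and disj: "A \<inter> B = {}"
    and nonneg: "\<And>P c. 0 \<le> wA P c" "\<And>Q x. 0 \<le> wB Q x"
    and xc: "x \<in> A" "c \<in> B" "{x, c} \<in> E"
  shows "edge_weight (A \<union> B) E (cross_weighting A B r wA wB) {x, c} \<le>
    (\<Sum>y\<in>{y\<in>A - {x}. r x c \<and> r y c}. wA {x, y} c) + (\<Sum>d\<in>{d\<in>B - {c}. r x c \<and> r x d}. wB {c, d} x)"
proof -
  have G': "simple_graph (B \<union> A) E" and disj': "B \<inter> A = {}" and "{c, x} \<in> E"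
    using G disj xc(3) by (auto simp: Un_commute insert_commute)
  have "edge_weight (A \<union> B) E (apex_weighting B A r\<inverse>\<inverse> wB) {c, x} \<le>
      (\<Sum>d\<in>{d\<in>B - {c}. r x c \<and> r x d}. wB {c, d} x)"
    using edge_weight_apex_weighting_cross_le[OF G' disj', where w=wB and r="r\<inverse>\<inverse>",
        OF nonneg(2) xc(2,1) \<open>{c, x} \<in> E\<close>]
    by (simp add: Un_commute)
  then show ?thesis
    using edge_weight_apex_weighting_cross_le[OF G disj, where w=wA and r=r, OF nonneg(1) xc]
    by (simp add: edge_weight_cross_weighting insert_commute)
qed

lemma half_cross_packing_cross_weighting:
  fixes wA wB :: "'a set \<Rightarrow> 'a \<Rightarrow> real"
  assumes G: "simple_graph (A \<union> B) E" and disj: "A \<inter> B = {}"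
    and r: "\<And>x c. r x c \<Longrightarrow> x \<in> A \<and> c \<in> B \<and> {x, c} \<in> E"
    and nonneg: "\<And>P c. 0 \<le> wA P c" "\<And>Q x. 0 \<le> wB Q x"
    and half_A: "\<And>x y. x \<in> A \<Longrightarrow> y \<in> A \<Longrightarrow> x \<noteq> y \<Longrightarrow> (\<Sum>c\<in>common_nbrs r B {x, y}. wA {x, y} c) = 1/2"
    and half_B: "\<And>c d. c \<in> B \<Longrightarrow> d \<in> B \<Longrightarrow> c \<noteq> d \<Longrightarrow> (\<Sum>x\<in>common_nbrs r\<inverse>\<inverse> A {c, d}. wB {c, d} x) = 1/2"
    and load: "\<And>x c. r x c \<Longrightarrow>
      (\<Sum>y\<in>{y\<in>A - {x}. r y c}. wA {x, y} c) + (\<Sum>d\<in>{d\<in>B - {c}. r x d}. wB {c, d} x) \<le> 1"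
  shows "half_cross_packing A B E (cross_weighting A B r wA wB)"
proof -
  let ?\<omega> = "cross_weighting A B r wA wB"
  have G': "simple_graph (B \<union> A) E" and disj': "B \<inter> A = {}"
    using G disj by (auto simp: Un_commute)
  have finite: "finite A" "finite B" using G by (auto simp: simple_graph_def)
  have edge: "\<exists>u v. e = {u, v} \<and> u \<noteq> v \<and> u \<in> A \<union> B \<and> v \<in> A \<union> B" if "e \<in> E" for e
    using that G unfolding simple_graph_def by (metis card_2_iff insert_subset)
  have inside: "edge_weight (A \<union> B) E ?\<omega> e = 1/2" if e: "e \<in> E" "e \<subseteq> A \<or> e \<subseteq> B" for e
  proof -
    obtain u v where uv: "e = {u, v}" "u \<noteq> v" using edge[OF e(1)] by blast
    show ?thesis
    proof (cases "e \<subseteq> A")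
      case True
      then show ?thesis
        using edge_weight_cross_weighting_inside[OF G disj, of r u v wA wB] half_A[of u v] uv e r
        by simp
    next
      case False
      then have "u \<in> B" "v \<in> B" using e(2) uv(1) by auto
      moreover have "{c, x} \<in> E" if "r\<inverse>\<inverse> c x" for c x
        using r[OF that[unfolded conversep_iff]] by (simp add: insert_commute)
      ultimately show ?thesis
        using edge_weight_cross_weighting_inside[OF G' disj', of "r\<inverse>\<inverse>" u v wB wA] half_B[of u v] uv e
        by (simp add: cross_weighting_swap Un_commute)
    qed
  qed
  have cross_edge: "edge_weight (A \<union> B) E ?\<omega> {x, c} \<le> 1" if xc: "x \<in> A" "c \<in> B" "{x, c} \<in> E" for x c
    using edge_weight_cross_weighting_cross_le[OF G disj, where wA=wA and wB=wB and r=r,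
        OF nonneg xc]
      load[of x c]
    by (cases "r x c") auto
  have bounds: "0 \<le> apex_weighting A B r wA T" "apex_weighting A B r wA T \<le> 1/2"
      "0 \<le> apex_weighting B A r\<inverse>\<inverse> wB T" "apex_weighting B A r\<inverse>\<inverse> wB T \<le> 1/2" for T
    using finite nonneg half_A half_B
    by (blast intro: apex_weighting_nonneg apex_weighting_le_half)+
  have "frac_triangle_packing (A \<union> B) E ?\<omega>"
    unfolding frac_triangle_packing_def
  proof (intro conjI ballI)
    fix e assume "e \<in> E"
    then obtain u v where uv: "e = {u, v}" "u \<in> A \<union> B" "v \<in> A \<union> B" using edge by blast
    consider "e \<subseteq> A \<or> e \<subseteq> B" | "u \<in> A" "v \<in> B" | "u \<in> B" "v \<in> A" using uv by auto
    then show "edge_weight (A \<union> B) E ?\<omega> e \<le> 1"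
    proof cases
      case 1
      then show ?thesis using inside[OF \<open>e \<in> E\<close>] by simp
    next
      case 2
      then show ?thesis using cross_edge \<open>e \<in> E\<close> uv(1) by simp
    next
      case 3
      then show ?thesis using cross_edge[of v u] \<open>e \<in> E\<close> uv(1) by (simp add: insert_commute)
    qed
  next
    fix T
    show "0 \<le> ?\<omega> T" "?\<omega> T \<le> 1" using bounds[of T] by (simp_all add: cross_weighting_def)
  qed
  moreover have "cross A B T" if "0 < ?\<omega> T" for T
    using that bounds[of T] apex_weighting_pos_imp_cross[of A B r wA T]
      apex_weighting_pos_imp_cross[of B A "r\<inverse>\<inverse>" wB T]
    by (force simp: cross_def cross_weighting_def)
  ultimately show ?thesis using inside by (simp add: half_cross_packing_def)
qed

section \<open>Uniform weights\<close>

definition uniform_load :: "'a set \<Rightarrow> 'a set \<Rightarrow> ('a \<Rightarrow> 'a \<Rightarrow> bool) \<Rightarrow> 'a \<Rightarrow> 'a \<Rightarrow> real" where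
  "uniform_load A B r x c =
     (\<Sum>y\<in>{y\<in>A - {x}. r y c}. 1 / (2 * real (card (common_nbrs r B {x, y})))) +
     (\<Sum>d\<in>{d\<in>B - {c}. r x d}. 1 / (2 * real (card (common_nbrs r\<inverse>\<inverse> A {c, d}))))"

lemma uniform_half_cross_packing:
  assumes G: "simple_graph (A \<union> B) E" and disj: "A \<inter> B = {}"
    and r: "\<And>x c. r x c \<Longrightarrow> x \<in> A \<and> c \<in> B \<and> {x, c} \<in> E"
    and nonempty_A: "\<And>x y. x \<in> A \<Longrightarrow> y \<in> A \<Longrightarrow> x \<noteq> y \<Longrightarrow> common_nbrs r B {x, y} \<noteq> {}"
    and nonempty_B: "\<And>c d. c \<in> B \<Longrightarrow> d \<in> B \<Longrightarrow> c \<noteq> d \<Longrightarrow> common_nbrs r\<inverse>\<inverse> A {c, d} \<noteq> {}"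
    and load: "\<And>x c. r x c \<Longrightarrow> uniform_load A B r x c \<le> 1"
  shows "\<exists>\<omega>. half_cross_packing A B E \<omega>"
proof -
  have finite: "finite A" "finite B" using G by (auto simp: simple_graph_def)
  have half: "(\<Sum>c\<in>S. 1 / (2 * real (card S))) = 1/2"
    if "S \<subseteq> X" "finite X" "S \<noteq> {}" for S X :: "'a set"
    using that finite_subset[OF that(1,2)] by simp
  have "half_cross_packing A B E (cross_weighting A B r
      (\<lambda>P c. 1 / (2 * real (card (common_nbrs r B P))))
      (\<lambda>Q x. 1 / (2 * real (card (common_nbrs r\<inverse>\<inverse> A Q)))))"
  proof (rule half_cross_packing_cross_weighting[OF G disj r])
    show "(\<Sum>c\<in>common_nbrs r B {x, y}. 1 / (2 * real (card (common_nbrs r B {x, y})))) = 1/2"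
      if "x \<in> A" "y \<in> A" "x \<noteq> y" for x y
      using half[of _ B] nonempty_A[OF that] finite by (auto simp: common_nbrs_def)
    show "(\<Sum>x\<in>common_nbrs r\<inverse>\<inverse> A {c, d}. 1 / (2 * real (card (common_nbrs r\<inverse>\<inverse> A {c, d})))) = 1/2"
      if "c \<in> B" "d \<in> B" "c \<noteq> d" for c d
      using half[of _ A] nonempty_B[OF that] finite by (auto simp: common_nbrs_def)
  qed (use load in \<open>auto simp: uniform_load_def\<close>)
  then show ?thesis by blast
qed

section \<open>Complete bipartite graphs\<close>

lemma bip_edges_diff_memI:
  assumes "bip_edges E A B = complete_bip A B - F" "x \<in> A" "c \<in> B" "{x, c} \<notin> F"
  shows "{x, c} \<in> E"
proof -
  have "{x, c} \<in> complete_bip A B" using assms by (auto simp: complete_bip_def)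
  then show ?thesis using assms by (auto simp: bip_edges_def)
qed

lemma complete_bipartite_load_le_one:
  fixes a b :: real
  assumes "1 \<le> a" "a \<le> b" "b \<le> a + 2"
  shows "(a - 1) / (2 * b) + (b - 1) / (2 * a) \<le> 1"
proof -
  have "(b - a) * (b - a) \<le> 2 * (b - a)" using assms by (intro mult_right_mono) auto
  then have "a * (a - 1) + b * (b - 1) \<le> 2 * a * b" using assms by (simp add: algebra_simps)
  then show ?thesis using assms by (simp add: field_simps)
qed

lemma complete_bip_half_cross_packing:
  assumes G: "simple_graph (A \<union> B) E" and disj: "A \<inter> B = {}"
    and card: "2 \<le> card A" "card A \<le> card B" "card B \<le> card A + 2"
    and bip: "bip_edges E A B = complete_bip A B"
  shows "\<exists>\<omega>. half_cross_packing A B E \<omega>"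
proof (rule uniform_half_cross_packing[OF G disj, where r="\<lambda>x c. x \<in> A \<and> c \<in> B"])
  let ?r = "\<lambda>x c. x \<in> A \<and> c \<in> B"
  have finite: "finite A" "finite B" using G by (auto simp: simple_graph_def)
  have nbrs: "common_nbrs ?r B {x, y} = B" if "x \<in> A" "y \<in> A" for x y
    using that by (auto simp: common_nbrs_def)
  have nbrs': "common_nbrs ?r\<inverse>\<inverse> A {c, d} = A" if "c \<in> B" "d \<in> B" for c d
    using that by (auto simp: common_nbrs_def)
  show "x \<in> A \<and> c \<in> B \<and> {x, c} \<in> E" if "?r x c" for x c
    using that bip bip_edges_diff_memI[of E A B "{}" x c] by auto
  show "common_nbrs ?r B {x, y} \<noteq> {}" if "x \<in> A" "y \<in> A" "x \<noteq> y" for x y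
    using nbrs[OF that(1,2)] card finite by auto
  show "common_nbrs ?r\<inverse>\<inverse> A {c, d} \<noteq> {}" if "c \<in> B" "d \<in> B" "c \<noteq> d" for c d
    using nbrs'[OF that(1,2)] card finite by auto
  fix x c assume xc: "?r x c"
  have "{y\<in>A - {x}. ?r y c} = A - {x}" "{d\<in>B - {c}. ?r x d} = B - {c}" using xc by auto
  then have "uniform_load A B ?r x c =
      real (card (A - {x})) / (2 * real (card B)) + real (card (B - {c})) / (2 * real (card A))"
    using xc nbrs nbrs' by (simp add: uniform_load_def)
  also have "\<dots> =
      (real (card A) - 1) / (2 * real (card B)) + (real (card B) - 1) / (2 * real (card A))"
    using card xc finite by (simp add: of_nat_diff)
  also have "\<dots> \<le> 1" using card by (intro complete_bipartite_load_le_one) auto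
  finally show "uniform_load A B ?r x c \<le> 1" .
qed

section \<open>Deleting a matching\<close>

lemma card_vimage_inj_on: "inj_on f A \<Longrightarrow> card {x\<in>A. f x \<in> S} = card (S \<inter> f ` A)"
proof -
  assume "inj_on f A"
  then have "inj_on f {x\<in>A. f x \<in> S}" by (rule inj_on_subset) auto
  moreover have "f ` {x\<in>A. f x \<in> S} = S \<inter> f ` A" by auto
  ultimately show ?thesis by (metis card_image)
qed

lemma injection_complement_load_identity:
  fixes a b :: real
  assumes "a > 2" "b = a \<or> b = a + 1"
  shows "(a - 2) / (2 * (b - 2)) + (a - 2) / (2 * (a - 2)) + (b - a) / (2 * (a - 1)) = 1"
proof -
  have "(a - 2) / (2 * (a - 2)) = 1/2" using assms by simp
  moreover have "(a - 2) / (2 * (b - 2)) + (b - a) / (2 * (a - 1)) = 1/2"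
    using assms by (auto simp: field_simps)
  ultimately show ?thesis by linarith
qed

context
  fixes A B :: "'a set" and mu :: "'a \<Rightarrow> 'a" and r :: "'a \<Rightarrow> 'a \<Rightarrow> bool"
  assumes finite: "finite A" "finite B"
    and card: "3 \<le> card A" "card A \<le> card B" "card B \<le> card A + 1"
    and inj: "inj_on mu A" and mu: "mu ` A \<subseteq> B"
    and r_iff: "\<And>x c. r x c \<longleftrightarrow> x \<in> A \<and> c \<in> B \<and> c \<noteq> mu x"
begin

lemma injection_complement_card_nbrs_A:
  "x \<in> A \<Longrightarrow> y \<in> A \<Longrightarrow> x \<noteq> y \<Longrightarrow> card (common_nbrs r B {x, y}) = card B - 2"
proof -
  assume xy: "x \<in> A" "y \<in> A" "x \<noteq> y"
  then have "common_nbrs r B {x, y} = B - {mu x, mu y}" "mu x \<noteq> mu y" "{mu x, mu y} \<subseteq> B"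
    using r_iff inj mu by (auto simp: common_nbrs_def inj_on_eq_iff)
  then show ?thesis using finite by (simp add: card_Diff_subset)
qed

lemma injection_complement_card_nbrs_B:
  "c \<in> B \<Longrightarrow> d \<in> B \<Longrightarrow> card (common_nbrs r\<inverse>\<inverse> A {c, d}) = card A - card ({c, d} \<inter> mu ` A)"
proof -
  assume "c \<in> B" "d \<in> B"
  then have "common_nbrs r\<inverse>\<inverse> A {c, d} = A - {z\<in>A. mu z \<in> {c, d}}"
    using r_iff by (auto simp: common_nbrs_def)
  then show ?thesis
    using finite card_vimage_inj_on[OF inj, of "{c, d}"] by (simp add: card_Diff_subset)
qed

lemma injection_complement_load_outside_image:
  assumes x: "x \<in> A" and c: "c \<in> B" "c \<notin> mu ` A"
  shows "uniform_load A B r x c = 1"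
proof -
  have card_image: "card (mu ` A) = card A" using inj by (rule card_image)
  have sub: "insert c (mu ` A) \<subseteq> B" and card_insert: "card (insert c (mu ` A)) = card A + 1"
    using c mu finite card_image by auto
  then have card_B: "card B = card A + 1" using card card_mono[OF finite(2) sub] by linarith
  then have "insert c (mu ` A) = B"
    using finite card_insert by (intro card_subset_eq[OF _ sub]) auto
  have "{y\<in>A - {x}. r y c} = A - {x}" "{d\<in>B - {c}. r x d} = mu ` A - {mu x}"
    using x c r_iff \<open>insert c (mu ` A) = B\<close> by auto
  moreover have "card (common_nbrs r B {x, y}) = card A - 1" if "y \<in> A - {x}" for y
    using injection_complement_card_nbrs_A[of x y] that x card_B by auto
  moreover have "card (common_nbrs r\<inverse>\<inverse> A {c, d}) = card A - 1" if "d \<in> mu ` A - {mu x}" for d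
    using injection_complement_card_nbrs_B[of c d] that c mu by (auto simp: Int_insert_left)
  ultimately have "uniform_load A B r x c = 2 * (real (card A - 1) / (2 * real (card A - 1)))"
    using x finite card_image inj by (simp add: uniform_load_def card_Diff_singleton)
  also have "\<dots> = 1" using card by simp
  finally show ?thesis .
qed

lemma injection_complement_load_inside_image:
  assumes xy: "x \<in> A" "y \<in> A" "x \<noteq> y"
  shows "uniform_load A B r x (mu y) = 1"
proof -
  let ?a = "real (card A)" and ?b = "real (card B)" and ?S = "B - {mu y, mu x}"
  have mu_xy: "mu x \<noteq> mu y" "mu x \<in> B" "mu y \<in> B" using xy inj mu by (auto simp: inj_on_eq_iff)
  have card_image: "card (mu ` A) = card A" using inj by (rule card_image)
  have "{z\<in>A - {x}. r z (mu y)} = A - {x, y}" "{d\<in>B - {mu y}. r x d} = ?S"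
    using xy mu_xy r_iff inj by (auto simp: inj_on_eq_iff)
  moreover have "card (A - {x, y}) = card A - 2" using xy finite by (simp add: card_Diff_subset)
  moreover have "card (common_nbrs r B {x, z}) = card B - 2" if "z \<in> A - {x, y}" for z
    using injection_complement_card_nbrs_A[of x z] that xy by auto
  moreover have "(\<Sum>d\<in>?S. 1 / (2 * real (card (common_nbrs r\<inverse>\<inverse> A {mu y, d})))) =
      (\<Sum>d\<in>?S \<inter> mu ` A. 1 / (2 * real (card A - 2))) + (\<Sum>d\<in>?S - mu ` A. 1 / (2 * real (card A - 1)))"
    (is "sum ?f ?S = _")
  proof -
    have "sum ?f ?S = sum ?f (?S \<inter> mu ` A) + sum ?f (?S - mu ` A)"
      using finite by (intro sum.Int_Diff) auto
    also have "\<dots> = (\<Sum>d\<in>?S \<inter> mu ` A. 1 / (2 * real (card A - 2))) +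
        (\<Sum>d\<in>?S - mu ` A. 1 / (2 * real (card A - 1)))"
      using injection_complement_card_nbrs_B[of "mu y"] mu_xy xy mu
      by (intro arg_cong2[where f="(+)"] sum.cong) (auto simp: card_insert_if)
    finally show ?thesis .
  qed
  moreover have "card (?S \<inter> mu ` A) = card A - 2"
  proof -
    have "?S \<inter> mu ` A = mu ` A - {mu y, mu x}" using mu by auto
    then show ?thesis using mu_xy xy finite card_image by (simp add: card_Diff_subset)
  qed
  moreover have "card (?S - mu ` A) = card B - card A"
  proof -
    have "?S - mu ` A = B - mu ` A" using xy by auto
    then show ?thesis using mu finite card_image by (simp add: card_Diff_subset)
  qed
  ultimately have "uniform_load A B r x (mu y) =
      (?a - 2) / (2 * (?b - 2)) + (?a - 2) / (2 * (?a - 2)) + (?b - ?a) / (2 * (?a - 1))"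
    using card by (simp add: uniform_load_def of_nat_diff)
  also have "\<dots> = 1" using card by (intro injection_complement_load_identity) auto
  finally show ?thesis .
qed

lemma injection_complement_half_cross_packing:
  assumes G: "simple_graph (A \<union> B) E" and disj: "A \<inter> B = {}"
    and edges: "\<And>x c. r x c \<Longrightarrow> {x, c} \<in> E"
  shows "\<exists>\<omega>. half_cross_packing A B E \<omega>"
proof (rule uniform_half_cross_packing[OF G disj])
  show "x \<in> A \<and> c \<in> B \<and> {x, c} \<in> E" if "r x c" for x c using that r_iff edges by blast
  show "common_nbrs r B {x, y} \<noteq> {}" if "x \<in> A" "y \<in> A" "x \<noteq> y" for x y
    using injection_complement_card_nbrs_A[OF that] card by force
  show "common_nbrs r\<inverse>\<inverse> A {c, d} \<noteq> {}" if "c \<in> B" "d \<in> B" "c \<noteq> d" for c d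
  proof -
    have "card ({c, d} \<inter> mu ` A) \<le> card {c, d}" by (rule card_mono) auto
    also have "\<dots> = 2" using that(3) by simp
    finally have "card ({c, d} \<inter> mu ` A) \<le> 2" .
    then show ?thesis using injection_complement_card_nbrs_B[OF that(1,2)] card by force
  qed
  show "uniform_load A B r x c \<le> 1" if "r x c" for x c
  proof (cases "c \<in> mu ` A")
    case True
    then obtain y where "y \<in> A" "c = mu y" by blast
    then show ?thesis using that r_iff injection_complement_load_inside_image[of x y] by force
  qed (use that r_iff injection_complement_load_outside_image in auto)
qed

end

lemma inj_on_extend:
  assumes finite: "finite A" "finite B" and card: "card A \<le> card B"
    and A1: "A1 \<subseteq> A" and inj: "inj_on m A1" and m: "m ` A1 \<subseteq> B"
  obtains mu where "inj_on mu A" "mu ` A \<subseteq> B" "\<And>x. x \<in> A1 \<Longrightarrow> mu x = m x"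
proof -
  have "card (A - A1) = card A - card A1"
    using A1 finite by (simp add: card_Diff_subset finite_subset)
  also have "\<dots> \<le> card B - card (m ` A1)" using card card_image[OF inj] by simp
  also have "\<dots> = card (B - m ` A1)" using m finite A1 by (simp add: card_Diff_subset finite_subset)
  finally obtain f where f: "inj_on f (A - A1)" "f ` (A - A1) \<subseteq> B - m ` A1"
    using card_le_inj[of "A - A1" "B - m ` A1"] finite by auto
  let ?mu = "\<lambda>x. if x \<in> A1 then m x else f x"
  have "inj_on ?mu A1" using inj by (subst inj_on_cong[where g=m]) auto
  moreover have "inj_on ?mu (A - A1)" using f(1) by (subst inj_on_cong[where g=f]) auto
  moreover have "?mu ` (A1 - (A - A1)) \<inter> ?mu ` ((A - A1) - A1) = {}" using f(2) by auto
  ultimately have "inj_on ?mu (A1 \<union> (A - A1))" by (simp only: inj_on_Un)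
  moreover have "A1 \<union> (A - A1) = A" using A1 by blast
  moreover have "?mu ` A \<subseteq> B" using f(2) m by auto
  ultimately show thesis using that[of ?mu] by auto
qed

lemma matching_extends_to_injection:
  assumes finite: "finite A" "finite B" and disj: "A \<inter> B = {}" and card: "card A \<le> card B"
    and M: "M \<subseteq> complete_bip A B" "is_matching M"
  obtains mu where "inj_on mu A" "mu ` A \<subseteq> B" "\<And>x c. x \<in> A \<Longrightarrow> c \<in> B \<Longrightarrow> {x, c} \<in> M \<Longrightarrow> mu x = c"
proof -
  have same_edge: "e = f" if "e \<in> M" "f \<in> M" "z \<in> e" "z \<in> f" for e f z
    using M(2) that unfolding is_matching_def by blast
  have partner_unique: "c = d" if "x \<in> A" "c \<in> B" "d \<in> B" "{x, c} \<in> M" "{x, d} \<in> M" for x c d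
  proof -
    have "{x, c} = {x, d}" using same_edge[OF that(4,5), of x] by simp
    then show ?thesis using that(1-3) disj by (auto simp: doubleton_eq_iff)
  qed
  have partner_inj: "x = y" if "x \<in> A" "y \<in> A" "c \<in> B" "{x, c} \<in> M" "{y, c} \<in> M" for x y c
  proof -
    have "{x, c} = {y, c}" using same_edge[OF that(4,5), of c] by simp
    then show ?thesis using that(1-3) disj by (auto simp: doubleton_eq_iff)
  qed
  define A1 where "A1 = {x\<in>A. \<exists>c\<in>B. {x, c} \<in> M}"
  define m where "m x = (THE c. c \<in> B \<and> {x, c} \<in> M)" for x
  have m: "x \<in> A" "m x \<in> B" "{x, m x} \<in> M" if x: "x \<in> A1" for x
  proof -
    show "x \<in> A" using x by (simp add: A1_def)
    obtain c where c: "c \<in> B" "{x, c} \<in> M" using x by (auto simp: A1_def)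
    have "m x = c" unfolding m_def
      using c partner_unique[OF \<open>x \<in> A\<close>] by (intro the_equality) auto
    then show "m x \<in> B" "{x, m x} \<in> M" using c by auto
  qed
  have "inj_on m A1"
  proof (rule inj_onI)
    fix x y assume "x \<in> A1" "y \<in> A1" "m x = m y"
    then show "x = y" using m[of x] m[of y] partner_inj[of x y "m x"] by simp
  qed
  moreover have "A1 \<subseteq> A" "m ` A1 \<subseteq> B" using m by auto
  ultimately obtain mu where mu: "inj_on mu A" "mu ` A \<subseteq> B" "\<And>x. x \<in> A1 \<Longrightarrow> mu x = m x"
    using inj_on_extend[OF finite card] by blast
  moreover have "mu x = c" if "x \<in> A" "c \<in> B" "{x, c} \<in> M" for x c
  proof -
    have "x \<in> A1" using that by (auto simp: A1_def)
    then show ?thesis using mu(3) m partner_unique that by metis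
  qed
  ultimately show thesis using that by blast
qed

lemma bip_minus_matching_half_cross_packing:
  assumes G: "simple_graph (A \<union> B) E" and disj: "A \<inter> B = {}"
    and card: "3 \<le> card A" "card A \<le> card B" "card B \<le> card A + 1"
    and M: "M \<subseteq> complete_bip A B" "is_matching M" "bip_edges E A B = complete_bip A B - M"
  shows "\<exists>\<omega>. half_cross_packing A B E \<omega>"
proof -
  have finite: "finite A" "finite B" using G by (auto simp: simple_graph_def)
  obtain mu where mu: "inj_on mu A" "mu ` A \<subseteq> B"
    and matched: "\<And>x c. x \<in> A \<Longrightarrow> c \<in> B \<Longrightarrow> {x, c} \<in> M \<Longrightarrow> mu x = c"
    using matching_extends_to_injection[OF finite disj card(2) M(1,2)] by blast
  have "{x, c} \<in> E" if "x \<in> A" "c \<in> B" "c \<noteq> mu x" for x c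
    using bip_edges_diff_memI[OF M(3) that(1,2)] matched[OF that(1,2)] that(3) by blast
  then show ?thesis
    using injection_complement_half_cross_packing[OF finite card mu,
        of "\<lambda>x c. x \<in> A \<and> c \<in> B \<and> c \<noteq> mu x"] G disj
    by blast
qed

section \<open>Deleting two edges at a vertex of A\<close>

lemma star_complement_load_le_one:
  fixes a b :: real
  assumes a: "4 \<le> a" and b: "b = a \<or> b = a + 1"
  shows "(a - 1) / (2 * (b - 2)) + (b - 3) / (2 * a) \<le> 1"
    and "(a - 2) / (2 * b) + (b - 1) / (2 * (a - 1)) \<le> 1"
    and "1 / (2 * (b - 2)) + (a - 2) / (2 * b) + 1 / (a - 1) + (b - 3) / (2 * a) \<le> 1"
proof -
  show "(a - 1) / (2 * (b - 2)) + (b - 3) / (2 * a) \<le> 1"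
    and "(a - 2) / (2 * b) + (b - 1) / (2 * (a - 1)) \<le> 1"
    using assms by (auto simp: field_simps)
  have "1 / (a - 1) \<le> 3 / (2 * a)" using a by (simp add: field_simps)
  from b show "1 / (2 * (b - 2)) + (a - 2) / (2 * b) + 1 / (a - 1) + (b - 3) / (2 * a) \<le> 1"
  proof
    assume "b = a"
    moreover have "1 / (2 * (a - 2)) \<le> 1 / a"
      "(a - 2) / (2 * a) + (a - 3) / (2 * a) = 1 - 5 / (2 * a)"
      using a by (simp_all add: field_simps)
    ultimately show ?thesis using \<open>1 / (a - 1) \<le> 3 / (2 * a)\<close> by simp
  next
    assume "b = a + 1"
    moreover have "(a - 2) / (2 * (a + 1)) \<le> (a - 2) / (2 * a)"
      using a by (intro divide_left_mono) auto
    moreover have "1 / (2 * (a - 1)) \<le> 2 / (3 * a)" "1 / (a - 1) \<le> 4 / (3 * a)"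
      "2 / (3 * a) + 4 / (3 * a) = 2 / a" "(a - 2) / (2 * a) = 1/2 - 1 / a"
      using a by (simp_all add: field_simps)
    ultimately show ?thesis by simp
  qed
qed

context
  fixes A B :: "'a set" and a0 b1 b2 :: 'a and r :: "'a \<Rightarrow> 'a \<Rightarrow> bool"
  assumes finite: "finite A" "finite B"
    and card: "4 \<le> card A" "card A \<le> card B" "card B \<le> card A + 1"
    and star: "a0 \<in> A" "b1 \<in> B" "b2 \<in> B" "b1 \<noteq> b2"
    and r_iff: "\<And>x c. r x c \<longleftrightarrow> x \<in> A \<and> c \<in> B \<and> \<not> (x = a0 \<and> (c = b1 \<or> c = b2))"
begin

lemma star_complement_card_nbrs_A:
  assumes "x \<in> A" "y \<in> A"
  shows "real (card (common_nbrs r B {x, y})) =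
    (if x = a0 \<or> y = a0 then real (card B) - 2 else real (card B))"
proof -
  have "common_nbrs r B {x, y} = (if x = a0 \<or> y = a0 then B - {b1, b2} else B)"
    using assms r_iff by (auto simp: common_nbrs_def)
  then show ?thesis using finite star card by (simp add: card_Diff_subset of_nat_diff)
qed

lemma star_complement_card_nbrs_B:
  assumes "c \<in> B" "d \<in> B"
  shows "real (card (common_nbrs r\<inverse>\<inverse> A {c, d})) =
    (if {c, d} \<inter> {b1, b2} = {} then real (card A) else real (card A) - 1)"
proof -
  have "common_nbrs r\<inverse>\<inverse> A {c, d} = (if {c, d} \<inter> {b1, b2} = {} then A else A - {a0})"
    using assms r_iff by (auto simp: common_nbrs_def)
  then show ?thesis using finite star card by (simp add: of_nat_diff)
qed

lemma star_complement_load_centre: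
  assumes c: "c \<in> B" "c \<noteq> b1" "c \<noteq> b2"
  shows "uniform_load A B r a0 c =
    (real (card A) - 1) / (2 * (real (card B) - 2)) + (real (card B) - 3) / (2 * real (card A))"
proof -
  have "{y\<in>A - {a0}. r y c} = A - {a0}" "{d\<in>B - {c}. r a0 d} = B - {c, b1, b2}"
    using c star r_iff by auto
  then have "uniform_load A B r a0 c =
      (\<Sum>y\<in>A - {a0}. 1 / (2 * (real (card B) - 2))) + (\<Sum>d\<in>B - {c, b1, b2}. 1 / (2 * real (card A)))"
    unfolding uniform_load_def
    using star_complement_card_nbrs_A star_complement_card_nbrs_B c star
    by (intro arg_cong2[where f="(+)"] sum.cong) auto
  moreover have "real (card (A - {a0})) = real (card A) - 1"
    "real (card (B - {c, b1, b2})) = real (card B) - 3"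
    using finite star c card by (simp_all add: card_Diff_subset of_nat_diff)
  ultimately show ?thesis by simp
qed

lemma star_complement_load_missing:
  assumes x: "x \<in> A" "x \<noteq> a0" and c: "c = b1 \<or> c = b2"
  shows "uniform_load A B r x c =
    (real (card A) - 2) / (2 * real (card B)) + (real (card B) - 1) / (2 * (real (card A) - 1))"
proof -
  have "{y\<in>A - {x}. r y c} = A - {x, a0}" "{d\<in>B - {c}. r x d} = B - {c}"
    using x c star r_iff by auto
  then have "uniform_load A B r x c =
      (\<Sum>y\<in>A - {x, a0}. 1 / (2 * real (card B))) + (\<Sum>d\<in>B - {c}. 1 / (2 * (real (card A) - 1)))"
    unfolding uniform_load_def
    using star_complement_card_nbrs_A star_complement_card_nbrs_B x c star
    by (intro arg_cong2[where f="(+)"] sum.cong) auto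
  moreover have "real (card (A - {x, a0})) = real (card A) - 2"
    "real (card (B - {c})) = real (card B) - 1"
    using finite star x c card by (auto simp: card_Diff_subset of_nat_diff)
  ultimately show ?thesis by simp
qed

lemma star_complement_load_other:
  assumes x: "x \<in> A" "x \<noteq> a0" and c: "c \<in> B" "c \<noteq> b1" "c \<noteq> b2"
  shows "uniform_load A B r x c =
    1 / (2 * (real (card B) - 2)) + (real (card A) - 2) / (2 * real (card B)) +
    1 / (real (card A) - 1) + (real (card B) - 3) / (2 * real (card A))"
proof -
  let ?f = "\<lambda>y. 1 / (2 * real (card (common_nbrs r B {x, y})))"
  let ?g = "\<lambda>d. 1 / (2 * real (card (common_nbrs r\<inverse>\<inverse> A {c, d})))"
  have "{y\<in>A - {x}. r y c} = insert a0 (A - {x, a0})"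
    "{d\<in>B - {c}. r x d} = {b1, b2} \<union> (B - {c, b1, b2})"
    using x c star r_iff by auto
  moreover have "sum ?f (insert a0 (A - {x, a0})) = ?f a0 + sum ?f (A - {x, a0})"
    using finite by simp
  moreover have "sum ?g ({b1, b2} \<union> (B - {c, b1, b2})) = ?g b1 + ?g b2 + sum ?g (B - {c, b1, b2})"
    using finite star by (simp add: sum.union_disjoint)
  moreover have "?f a0 = 1 / (2 * (real (card B) - 2))" "?g b1 = 1 / (2 * (real (card A) - 1))"
    "?g b2 = 1 / (2 * (real (card A) - 1))"
    using star_complement_card_nbrs_A star_complement_card_nbrs_B x c star by auto
  moreover have "sum ?f (A - {x, a0}) = (\<Sum>y\<in>A - {x, a0}. 1 / (2 * real (card B)))"
    using star_complement_card_nbrs_A x by (intro sum.cong) auto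
  moreover have "sum ?g (B - {c, b1, b2}) = (\<Sum>d\<in>B - {c, b1, b2}. 1 / (2 * real (card A)))"
    using star_complement_card_nbrs_B c by (intro sum.cong) auto
  moreover have "real (card (A - {x, a0})) = real (card A) - 2"
    "real (card (B - {c, b1, b2})) = real (card B) - 3"
    using finite star x c card by (auto simp: card_Diff_subset of_nat_diff)
  moreover have "2 / (2 * real (card A) - 2) = 1 / (real (card A) - 1)"
    using card by (simp add: field_simps)
  ultimately show ?thesis by (simp add: uniform_load_def)
qed

lemma star_complement_large_half_cross_packing:
  assumes G: "simple_graph (A \<union> B) E" and disj: "A \<inter> B = {}"
    and edges: "\<And>x c. r x c \<Longrightarrow> {x, c} \<in> E"
  shows "\<exists>\<omega>. half_cross_packing A B E \<omega>"
proof (rule uniform_half_cross_packing[OF G disj])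
  have a: "4 \<le> real (card A)"
    and b: "real (card B) = real (card A) \<or> real (card B) = real (card A) + 1"
    using card by auto
  show "x \<in> A \<and> c \<in> B \<and> {x, c} \<in> E" if "r x c" for x c using that r_iff edges by blast
  show "common_nbrs r B {x, y} \<noteq> {}" if "x \<in> A" "y \<in> A" "x \<noteq> y" for x y
    using star_complement_card_nbrs_A[OF that(1,2)] a b by (auto split: if_splits)
  show "common_nbrs r\<inverse>\<inverse> A {c, d} \<noteq> {}" if "c \<in> B" "d \<in> B" "c \<noteq> d" for c d
    using star_complement_card_nbrs_B[OF that(1,2)] a by (auto split: if_splits)
  show "uniform_load A B r x c \<le> 1" if "r x c" for x c
  proof -
    consider "x = a0" | "x \<noteq> a0" "c = b1 \<or> c = b2" | "x \<noteq> a0" "c \<noteq> b1" "c \<noteq> b2" by blast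
    then show ?thesis
    proof cases
      case 1
      then show ?thesis
        using that r_iff star_complement_load_centre star_complement_load_le_one(1)[OF a b] by auto
    next
      case 2
      then show ?thesis
        using that r_iff star_complement_load_missing star_complement_load_le_one(2)[OF a b] by auto
    next
      case 3
      then show ?thesis
        using that r_iff star_complement_load_other star_complement_load_le_one(3)[OF a b] by auto
    qed
  qed
qed

end

lemma star_complement_3_3_half_cross_packing:
  assumes G: "simple_graph ({a0, y, z} \<union> {b1, b2, b3}) E"
    and distinct: "distinct [a0, y, z, b1, b2, b3]"
    and edges: "\<And>x c. x \<in> {a0, y, z} \<Longrightarrow> c \<in> {b1, b2, b3} \<Longrightarrow>
      \<not> (x = a0 \<and> (c = b1 \<or> c = b2)) \<Longrightarrow> {x, c} \<in> E"
  shows "\<exists>\<omega>. half_cross_packing {a0, y, z} {b1, b2, b3} E \<omega>"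
proof -
  have finite: "finite {a0, y, z}" "finite {b1, b2, b3}" by simp_all
  show ?thesis
    apply (rule exI, rule half_cross_packing_cross_weighting[where
      r = "\<lambda>x c. x \<in> {a0, y, z} \<and> c \<in> {b1, b2, b3} \<and> \<not> (x = a0 \<and> (c = b1 \<or> c = b2))" and
      wA = "\<lambda>P c. if a0 \<in> P then (if c = b3 then 1/2 else 0) else (if c = b3 then 0 else 1/4)" and
      wB = "\<lambda>Q x. if x = a0 then 0 else 1/4"])
    apply (unfold common_nbrs_def conversep_iff Diff_iff singleton_iff conj_assoc
      sum.inter_filter[OF finite(1)] sum.inter_filter[OF finite(2)])
    apply (insert assms, auto)[7]
    apply (insert distinct, elim conjE, simp only: insert_iff empty_iff simp_thms, elim disjE)
    apply auto
    done
qed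

lemma star_complement_3_4_half_cross_packing:
  assumes G: "simple_graph ({a0, y, z} \<union> {b1, b2, b3, b4}) E"
    and distinct: "distinct [a0, y, z, b1, b2, b3, b4]"
    and edges: "\<And>x c. x \<in> {a0, y, z} \<Longrightarrow> c \<in> {b1, b2, b3, b4} \<Longrightarrow>
      \<not> (x = a0 \<and> (c = b1 \<or> c = b2)) \<Longrightarrow> {x, c} \<in> E"
  shows "\<exists>\<omega>. half_cross_packing {a0, y, z} {b1, b2, b3, b4} E \<omega>"
proof -
  have finite: "finite {a0, y, z}" "finite {b1, b2, b3, b4}" by simp_all
  show ?thesis
    apply (rule exI, rule half_cross_packing_cross_weighting[where
      r = "\<lambda>x c. x \<in> {a0, y, z} \<and> c \<in> {b1, b2, b3, b4} \<and> \<not> (x = a0 \<and> (c = b1 \<or> c = b2))" and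
      wA = "\<lambda>P c. if a0 \<in> P then (if c \<in> {b3, b4} then 1/4 else 0)
                 else (if c \<in> {b1, b2} then 1/4 else 0)" and
      wB = "\<lambda>Q x. if b1 \<notin> Q \<and> b2 \<notin> Q then (if x = a0 then 1/2 else 0)
                 else (if x = a0 then 0 else 1/4)"])
    apply (unfold common_nbrs_def conversep_iff Diff_iff singleton_iff conj_assoc
      sum.inter_filter[OF finite(1)] sum.inter_filter[OF finite(2)])
    apply (insert assms, auto)[7]
    apply (insert distinct, elim conjE, simp only: insert_iff empty_iff simp_thms, elim disjE)
    apply auto
    done
qed

lemma star_complement_small_half_cross_packing:
  assumes G: "simple_graph (A \<union> B) E" and disj: "A \<inter> B = {}"
    and card: "card A = 3" "card A \<le> card B" "card B \<le> card A + 1"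
    and star: "a0 \<in> A" "b1 \<in> B" "b2 \<in> B" "b1 \<noteq> b2"
    and edges: "\<And>x c. x \<in> A \<Longrightarrow> c \<in> B \<Longrightarrow> \<not> (x = a0 \<and> (c = b1 \<or> c = b2)) \<Longrightarrow> {x, c} \<in> E"
  shows "\<exists>\<omega>. half_cross_packing A B E \<omega>"
proof -
  have finite: "finite A" "finite B" using G by (auto simp: simple_graph_def)
  then have "card (A - {a0}) = 2" using card star by simp
  then obtain y z where "A - {a0} = {y, z}" "y \<noteq> z" by (meson card_2_iff)
  then have A: "A = {a0, y, z}" "distinct [a0, y, z]" using star(1) by auto
  have card_B: "card (B - {b1, b2}) = card B - 2" using finite star by (simp add: card_Diff_subset)
  consider "card B = 3" | "card B = 4" using card by linarith
  then show ?thesis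
  proof cases
    case 1
    then have "card (B - {b1, b2}) = 1" using card_B by simp
    then obtain b3 where "B - {b1, b2} = {b3}" by (meson card_1_singletonE)
    then have B: "B = {b1, b2, b3}" "distinct [b1, b2, b3]" using star by auto
    have dist: "distinct [a0, y, z, b1, b2, b3]" using A B disj by auto
    from G dist edges show ?thesis
      unfolding A(1) B(1) by (rule star_complement_3_3_half_cross_packing)
  next
    case 2
    then have "card (B - {b1, b2}) = 2" using card_B by simp
    then obtain b3 b4 where "B - {b1, b2} = {b3, b4}" "b3 \<noteq> b4" by (meson card_2_iff)
    then have B: "B = {b1, b2, b3, b4}" "distinct [b1, b2, b3, b4]" using star by auto
    have dist: "distinct [a0, y, z, b1, b2, b3, b4]" using A B disj by auto
    from G dist edges show ?thesis
      unfolding A(1) B(1) by (rule star_complement_3_4_half_cross_packing)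
  qed
qed

lemma bip_minus_two_adjacent_half_cross_packing:
  assumes G: "simple_graph (A \<union> B) E" and disj: "A \<inter> B = {}"
    and card: "3 \<le> card A" "card A \<le> card B" "card B \<le> card A + 1"
    and star: "a0 \<in> A" "b1 \<in> B" "b2 \<in> B" "b1 \<noteq> b2"
    and bip: "bip_edges E A B = complete_bip A B - {{a0, b1}, {a0, b2}}"
  shows "\<exists>\<omega>. half_cross_packing A B E \<omega>"
proof -
  have finite: "finite A" "finite B" using G by (auto simp: simple_graph_def)
  have edges: "{x, c} \<in> E" if "x \<in> A" "c \<in> B" "\<not> (x = a0 \<and> (c = b1 \<or> c = b2))" for x c
    using bip_edges_diff_memI[OF bip that(1,2)] that star disj by (auto simp: doubleton_eq_iff)
  show ?thesis
  proof (cases "card A = 3")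
    case True
    then show ?thesis
      using star_complement_small_half_cross_packing[OF G disj True card(2,3) star edges] by simp
  next
    case False
    then have "4 \<le> card A" using card by simp
    then show ?thesis
      using star_complement_large_half_cross_packing[OF finite _ card(2,3) star,
          of "\<lambda>x c. x \<in> A \<and> c \<in> B \<and> \<not> (x = a0 \<and> (c = b1 \<or> c = b2))"] G disj edges
      by blast
  qed
qed

section \<open>Deleting two disjoint edges from K(3,5)\<close>

lemma matching_complement_3_5_half_cross_packing:
  assumes G: "simple_graph ({x1, x2, z} \<union> {c1, c2, d1, d2, d3}) E"
    and distinct: "distinct [x1, x2, z, c1, c2, d1, d2, d3]"
    and edges: "\<And>x c. x \<in> {x1, x2, z} \<Longrightarrow> c \<in> {c1, c2, d1, d2, d3} \<Longrightarrow>
      \<not> (x = x1 \<and> c = c1) \<Longrightarrow> \<not> (x = x2 \<and> c = c2) \<Longrightarrow> {x, c} \<in> E"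
  shows "\<exists>\<omega>. half_cross_packing {x1, x2, z} {c1, c2, d1, d2, d3} E \<omega>"
proof -
  have finite: "finite {x1, x2, z}" "finite {c1, c2, d1, d2, d3}" by simp_all
  show ?thesis
    apply (rule exI, rule half_cross_packing_cross_weighting[where
      r = "\<lambda>x c. x \<in> {x1, x2, z} \<and> c \<in> {c1, c2, d1, d2, d3} \<and>
                 \<not> (x = x1 \<and> c = c1) \<and> \<not> (x = x2 \<and> c = c2)" and
      wA = "\<lambda>P c. if c \<in> {d1, d2, d3} then 1/6 else 0" and
      wB = "\<lambda>Q x. if Q \<inter> {c1, c2} = {} then 1/6
                 else if {c1, c2} \<subseteq> Q then (if x = z then 1/2 else 0)
                 else if x = z then 1/6 else 1/3"])
    apply (unfold common_nbrs_def conversep_iff Diff_iff singleton_iff conj_assoc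
      sum.inter_filter[OF finite(1)] sum.inter_filter[OF finite(2)])
    apply (insert assms, auto)[7]
    apply (insert distinct, elim conjE, simp only: insert_iff empty_iff simp_thms, elim disjE)
    apply auto
    done
qed

lemma bip_minus_two_matching_half_cross_packing:
  assumes G: "simple_graph (A \<union> B) E" and disj: "A \<inter> B = {}"
    and card: "card A = 3" "card B = 5"
    and M: "M \<subseteq> complete_bip A B" "is_matching M" "card M = 2"
      "bip_edges E A B = complete_bip A B - M"
  shows "\<exists>\<omega>. half_cross_packing A B E \<omega>"
proof -
  have finite: "finite A" "finite B" using G by (auto simp: simple_graph_def)
  obtain e1 e2 where "M = {e1, e2}" "e1 \<noteq> e2" using M(3) by (meson card_2_iff)
  moreover obtain x1 c1 x2 c2
    where "e1 = {x1, c1}" "e2 = {x2, c2}" "x1 \<in> A" "c1 \<in> B" "x2 \<in> A" "c2 \<in> B"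
    using M(1) \<open>M = {e1, e2}\<close> by (auto simp: complete_bip_def)
  ultimately have M12: "M = {{x1, c1}, {x2, c2}}" and xc: "x1 \<in> A" "c1 \<in> B" "x2 \<in> A" "c2 \<in> B"
    and "x1 \<noteq> x2" "c1 \<noteq> c2"
    using M(2) disj by (auto simp: is_matching_def)
  have "card (A - {x1, x2}) = 1" "card (B - {c1, c2}) = 3"
    using finite card xc \<open>x1 \<noteq> x2\<close> \<open>c1 \<noteq> c2\<close> by (simp_all add: card_Diff_subset)
  then obtain z d1 d2 d3
    where "A - {x1, x2} = {z}" "B - {c1, c2} = {d1, d2, d3}" "distinct [d1, d2, d3]"
    by (auto simp: card_1_singleton_iff card_3_iff)
  then have A: "A = {x1, x2, z}" and B: "B = {c1, c2, d1, d2, d3}"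
    and dist: "distinct [x1, x2, z, c1, c2, d1, d2, d3]"
    using xc \<open>x1 \<noteq> x2\<close> \<open>c1 \<noteq> c2\<close> disj by auto
  have edges: "{x, c} \<in> E" if "x \<in> A" "c \<in> B" "\<not> (x = x1 \<and> c = c1)" "\<not> (x = x2 \<and> c = c2)" for x c
    using bip_edges_diff_memI[OF M(4) that(1,2)] that xc disj unfolding M12
    by (auto simp: doubleton_eq_iff)
  from G dist edges show ?thesis
    unfolding A B by (rule matching_complement_3_5_half_cross_packing)
qed

theorem proposition7p2:
  fixes A B :: "'a set" and E :: "'a set set"
  assumes graph: "simple_graph (A \<union> B) E"
    and disj: "A \<inter> B = {}"
    and cases:
      "(2 \<le> card A \<and> card A \<le> card B \<and> card B \<le> card A + 2 \<and>
          bip_edges E A B = complete_bip A B)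
       \<or> (3 \<le> card A \<and> card A \<le> card B \<and> card B \<le> card A + 1 \<and>
          (\<exists>M. M \<subseteq> complete_bip A B \<and> is_matching M \<and>
               bip_edges E A B = complete_bip A B - M))
       \<or> (3 \<le> card A \<and> card A \<le> card B \<and> card B \<le> card A + 1 \<and>
          (\<exists>a b1 b2. a \<in> A \<and> b1 \<in> B \<and> b2 \<in> B \<and> b1 \<noteq> b2 \<and>
               bip_edges E A B = complete_bip A B - {{a, b1}, {a, b2}}))
       \<or> (card A = 3 \<and> card B = 5 \<and>
          (\<exists>M. M \<subseteq> complete_bip A B \<and> is_matching M \<and> card M = 2 \<and>
               bip_edges E A B = complete_bip A B - M))"
  shows "\<exists>\<omega>. frac_triangle_packing (A \<union> B) E \<omega> \<and>
             (\<forall>T\<in>triangles (A \<union> B) E. 0 < \<omega> T \<longrightarrow> cross A B T) \<and>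
             (\<forall>e\<in>E. (e \<subseteq> A \<or> e \<subseteq> B) \<longrightarrow> edge_weight (A \<union> B) E \<omega> e = 1 / 2)"
proof -
  from cases have "\<exists>\<omega>. half_cross_packing A B E \<omega>"
    by (elim disjE conjE exE)
      (blast intro: complete_bip_half_cross_packing[OF graph disj]
         bip_minus_matching_half_cross_packing[OF graph disj]
         bip_minus_two_adjacent_half_cross_packing[OF graph disj]
         bip_minus_two_matching_half_cross_packing[OF graph disj])+
  then show ?thesis by (simp add: half_cross_packing_def)
qed

end
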